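(* Assume (A1)–(A3) and $\alpha=k_{max}/r>1$, and let $LR_{target}>0$ be given. Consider the problem of finding a concentration profile $C$ with $LR_{max}[C]=LR_{target}$ and with $AUC[C]$ as small as possible. Then: (a) The function $f_r(c)=\frac{k(c)-r}{c}$ on $(0,\infty)$ has a unique maximizer $c_{opt}$, which is also the unique solution in $(0,\infty)$ of $k'(c)=\frac{k(c)-r}{c}$. (b) The unique solution (up to equality almost everywhere) of the problem is $$C_{opt}(t)=\begin{cases} c_{opt}, & 0\le t\le T_{opt},\\ 0, & t>T_{opt},\end{cases}\qquad T_{opt}=\frac{\ln(10)\,LR_{target}}{k(c_{opt})-r}.$$ (c) $C_{opt}$ satisfies $LR(T_{opt})=LR_{target}$, and for every concentration profile $C$ with $LR_{max}[C]=LR_{target}$, $$AUC[C]\ \ge\ AUC_{opt}:=T_{opt}\,c_{opt}=\ln(10)\,LR_{target}\,\frac{c_{opt}}{k(c_{opt})-r},$$ with equality iff $C=C_{opt}$ almost everywhere.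
   Context: Let $r>0$ and let $k:[0,\infty)\to[0,\infty)$ satisfy: (A1) $k(0)=0$, $k$ is continuous and strictly increasing on $[0,\infty)$, and twice differentiable on $(0,\infty)$; (A2) $\lim_{c\to\infty}k(c)=k_{max}<\infty$; (A3) either (i) (concave case) $k''(c)<0$ for all $c>0$, or (ii) (sigmoidal case) there is $c_{infl}>0$ with $k''(c)>0$ for $0<c<c_{infl}$ and $k''(c)<0$ for $c>c_{infl}$. Set $\alpha=k_{max}/r$. A concentration profile is a non-negative function $C\in L^1[0,\infty)$. Its area under the curve is $AUC[C]=\int_0^\infty C(t)\,dt$. For $T\ge0$ its log-reduction is $LR(T)=\frac{1}{\ln 10}\int_0^T[k(C(t))-r]\,dt$, and $LR_{max}[C]=\max_{T\ge0}LR(T)$ (this maximum exists). (Interpretation: the microbial population obeys $B'=(r-k(C(t)))B$, and $LR(T)=\log_{10}(B(0)/B(T))$.) *)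

theory Defs
  imports "HOL-Analysis.Analysis"
begin

definition conc_profile :: "(real \<Rightarrow> real) \<Rightarrow> bool" where
  "conc_profile C \<longleftrightarrow> (\<forall>t\<ge>0. C t \<ge> 0) \<and> C integrable_on {0..}"

definition AUC :: "(real \<Rightarrow> real) \<Rightarrow> real" where
  "AUC C = integral {0..} C"

definition LR :: "(real \<Rightarrow> real) \<Rightarrow> real \<Rightarrow> (real \<Rightarrow> real) \<Rightarrow> real \<Rightarrow> real" where
  "LR k r C T = (1 / ln 10) * integral {0..T} (\<lambda>t. k (C t) - r)"

text \<open>The maximum over T >= 0 exists (as stated in the paper), so it coincides with the supremum.\<close>
definition LR_max :: "(real \<Rightarrow> real) \<Rightarrow> real \<Rightarrow> (real \<Rightarrow> real) \<Rightarrow> real" where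
  "LR_max k r C = (SUP T\<in>{0..}. LR k r C T)"

end

theory Submission
  imports Defs
begin

text \<open>Let F = (k c_opt - r) / c_opt be the maximal efficiency. Then k c - r \<le> F * c for all
  c \<ge> 0, with equality only at c_opt, so ln 10 * LR(T) \<le> F * AUC[C] for every T. This gives
  AUC[C] \<ge> ln 10 * LR_target / F = T_opt * c_opt, which C_opt attains. In the equality case the
  slack of the estimate at time U (the gap integral up to U plus F times the AUC left after U)
  is continuous in U, has infimum 0 and stays away from 0 for large U, hence vanishes at some U;
  then C = c_opt a.e. on [0, U] and C = 0 a.e. afterwards.

  The maximiser exists because the efficiency is negative near 0 and small for large c. It is
  unique because c^2 times the derivative of the efficiency, c * k'(c) - (k c - r), has
  derivative c * k''(c): it is positive on the convex part and strictly decreasing on the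
  concave part, so it has exactly one zero.\<close>

lemma AE_lborel_iff_negligible:
  "(AE x in lborel. P x) \<longleftrightarrow> (\<exists>N. negligible N \<and> {x. \<not> P x} \<subseteq> N)"
  using eventually_ae_filter_negligible[of P] by (simp add: AE_completion_iff)

lemma negligible_nonzero_if_integral_eq_0:
  fixes f :: "'a::euclidean_space \<Rightarrow> real"
  assumes f: "f integrable_on S" and S: "S \<in> sets lebesgue"
    and nonneg: "\<And>x. x \<in> S \<Longrightarrow> 0 \<le> f x" and zero: "integral S f = 0"
  shows "negligible {x\<in>S. f x \<noteq> 0}"
proof -
  have f_abs: "f absolutely_integrable_on S"
    using nonnegative_absolutely_integrable_1[OF f] nonneg by blast
  then have "integrable lebesgue (\<lambda>x. indicator S x *\<^sub>R f x)"
    by (simp add: set_integrable_def)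
  moreover have "(LINT x | lebesgue. indicator S x *\<^sub>R f x) = 0"
    using set_lebesgue_integral_eq_integral(2)[OF f_abs] zero by (simp add: set_lebesgue_integral_def)
  ultimately have "AE x in lebesgue. indicator S x *\<^sub>R f x = 0"
    using integral_nonneg_eq_0_iff_AE[of lebesgue "\<lambda>x. indicator S x *\<^sub>R f x"] nonneg
    by (auto simp: indicator_def)
  then obtain N where "negligible N" "{x. indicator S x *\<^sub>R f x \<noteq> 0} \<subseteq> N"
    unfolding eventually_ae_filter_negligible by blast
  moreover have "{x\<in>S. f x \<noteq> 0} \<subseteq> {x. indicator S x *\<^sub>R f x \<noteq> 0}"
    by (auto simp: indicator_def)
  ultimately show ?thesis
    by (blast intro: negligible_subset)
qed

lemma integrable_on_subset_nonneg:
  fixes f :: "'a::euclidean_space \<Rightarrow> real"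
  assumes "f integrable_on S" "T \<in> sets lebesgue" "T \<subseteq> S" "\<And>x. x \<in> S \<Longrightarrow> 0 \<le> f x"
  shows "f integrable_on T"
  using nonnegative_absolutely_integrable_1[OF assms(1)] assms(4)
    set_integrable_subset[OF _ assms(2,3)] set_lebesgue_integral_eq_integral(1) by blast

lemma continuous_on_Icc_attains_nonpos:
  fixes g :: "real \<Rightarrow> real"
  assumes "a \<le> b" and g: "continuous_on {a..b} g"
    and small: "\<And>e. e > 0 \<Longrightarrow> \<exists>x\<ge>a. g x < e"
    and "\<delta> > 0" and tail: "\<And>x. x \<ge> b \<Longrightarrow> \<delta> \<le> g x"
  shows "\<exists>x\<in>{a..b}. g x \<le> 0"
proof -
  obtain x0 where x0: "x0 \<in> {a..b}" "\<And>y. y \<in> {a..b} \<Longrightarrow> g x0 \<le> g y"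
    using continuous_attains_inf[OF compact_Icc _ g] \<open>a \<le> b\<close> by auto
  have "g x0 \<le> 0"
  proof (rule ccontr)
    assume "\<not> g x0 \<le> 0"
    then obtain x where "x \<ge> a" "g x < min (g x0) \<delta>"
      using small[of "min (g x0) \<delta>"] \<open>\<delta> > 0\<close> by auto
    then show False
      using x0(2)[of x] tail[of x] by (cases "x \<le> b") auto
  qed
  then show ?thesis
    using x0(1) by blast
qed

section \<open>Concentration profiles\<close>

lemma conc_profile_integrable_on_Icc: "conc_profile C \<Longrightarrow> C integrable_on {0..U}"
  unfolding conc_profile_def by (auto intro: integrable_on_subinterval)

lemma AUC_nonneg: "conc_profile C \<Longrightarrow> AUC C \<ge> 0"
  unfolding conc_profile_def AUC_def by (auto intro: integral_nonneg)

lemma integral_Icc_le_AUC: "conc_profile C \<Longrightarrow> integral {0..U} C \<le> AUC C"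
  unfolding AUC_def using conc_profile_integrable_on_Icc
  by (intro integral_subset_le) (auto simp: conc_profile_def)

lemma AUC_cong_AE:
  assumes "AE t in lborel. t \<ge> 0 \<longrightarrow> C t = D t"
  shows "AUC C = AUC D"
proof -
  obtain N where "negligible N" "{t. \<not> (t \<ge> 0 \<longrightarrow> C t = D t)} \<subseteq> N"
    using assms by (auto simp: AE_lborel_iff_negligible)
  then show ?thesis
    unfolding AUC_def by (intro integral_spike[of N]) auto
qed

lemma integral_Ici_eq_AUC_diff:
  assumes C: "conc_profile C" and "U \<ge> 0"
  shows "C integrable_on {U..}" "integral {U..} C = AUC C - integral {0..U} C"
proof -
  have C_nonneg: "\<And>t. t \<ge> 0 \<Longrightarrow> C t \<ge> 0" and C_int: "C integrable_on {0..}"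
    using C by (auto simp: conc_profile_def)
  show C_int_U: "C integrable_on {U..}"
    by (rule integrable_on_subset_nonneg[OF C_int]) (use \<open>U \<ge> 0\<close> C_nonneg in auto)
  have "integral ({0..U} \<union> {U..}) C = integral {0..U} C + integral {U..} C"
    by (rule integral_Un[OF conc_profile_integrable_on_Icc[OF C] C_int_U])
       (auto intro: negligible_subset[OF negligible_sing[of U]])
  moreover have "{0..U} \<union> {U..} = {0::real..}"
    using \<open>U \<ge> 0\<close> by auto
  ultimately show "integral {U..} C = AUC C - integral {0..U} C"
    by (simp add: AUC_def)
qed

section \<open>The efficiency (k c - r) / c\<close>

locale kill_rate =
  fixes k :: "real \<Rightarrow> real" and r kmax :: real
  assumes r_pos: "r > 0"
    and k_0: "k 0 = 0"
    and continuous_k: "continuous_on {0..} k"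
    and strict_mono_k: "strict_mono_on {0..} k"
    and k_differentiable: "\<And>c. c > 0 \<Longrightarrow> k differentiable (at c)"
    and deriv_k_differentiable: "\<And>c. c > 0 \<Longrightarrow> deriv k differentiable (at c)"
    and k_tendsto_kmax: "(k \<longlongrightarrow> kmax) at_top"
    and kmax_gt_r: "kmax > r"
    and sigmoidal: \<comment> \<open>c_infl = 0 is the concave case\<close>
      "\<exists>c_infl\<ge>0. (\<forall>c. 0 < c \<and> c < c_infl \<longrightarrow> deriv (deriv k) c \<ge> 0) \<and>
                                (\<forall>c>c_infl. deriv (deriv k) c < 0)"
begin

definition efficiency :: "real \<Rightarrow> real" where
  "efficiency c = (k c - r) / c"

definition efficiency_deriv_numer :: "real \<Rightarrow> real" where
  "efficiency_deriv_numer c = c * deriv k c - (k c - r)"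

lemma has_deriv_k: "c > 0 \<Longrightarrow> (k has_real_derivative deriv k c) (at c)"
  using k_differentiable DERIV_deriv_iff_real_differentiable by blast

lemma has_deriv_deriv_k: "c > 0 \<Longrightarrow> (deriv k has_real_derivative deriv (deriv k) c) (at c)"
  using deriv_k_differentiable DERIV_deriv_iff_real_differentiable by blast

lemma efficiency_deriv_numer_has_deriv:
  assumes "c > 0"
  shows "(efficiency_deriv_numer has_real_derivative c * deriv (deriv k) c) (at c)"
proof -
  have "((\<lambda>c. c * deriv k c) has_real_derivative 1 * deriv k c + deriv (deriv k) c * c) (at c)"
    by (rule DERIV_mult[OF DERIV_ident has_deriv_deriv_k[OF assms]])
  then have "((\<lambda>c. c * deriv k c - (k c - r)) has_real_derivative
        (1 * deriv k c + deriv (deriv k) c * c) - (deriv k c - 0)) (at c)"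
    by (rule DERIV_diff[OF _ DERIV_diff[OF has_deriv_k[OF assms] DERIV_const]])
  then show ?thesis
    unfolding efficiency_deriv_numer_def[abs_def] by (simp add: mult.commute)
qed

lemma efficiency_has_deriv:
  assumes "c > 0"
  shows "(efficiency has_real_derivative efficiency_deriv_numer c / c\<^sup>2) (at c)"
proof -
  have "((\<lambda>c. (k c - r) / c) has_real_derivative
        ((deriv k c - 0) * c - (k c - r) * 1) / (c * c)) (at c)"
    by (intro derivative_intros has_deriv_k assms) (use assms in auto)
  then show ?thesis
    unfolding efficiency_def[abs_def]
    by (simp add: efficiency_deriv_numer_def power2_eq_square algebra_simps)
qed

lemma k_less: "0 \<le> a \<Longrightarrow> a < b \<Longrightarrow> k a < k b"
  using strict_mono_k by (auto simp: strict_mono_on_def)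

lemma k_le: "0 \<le> a \<Longrightarrow> a \<le> b \<Longrightarrow> k a \<le> k b"
  using k_less by (cases "a = b") (auto intro: less_imp_le)

lemma k_nonneg: "c \<ge> 0 \<Longrightarrow> k c \<ge> 0"
  using k_le[of 0 c] k_0 by simp

lemma deriv_k_nonneg:
  assumes "c > 0"
  shows "deriv k c \<ge> 0"
proof (rule ccontr)
  assume "\<not> deriv k c \<ge> 0"
  then obtain d where "d > 0" "\<And>h. 0 < h \<Longrightarrow> h < d \<Longrightarrow> k (c + h) < k c"
    using DERIV_neg_dec_right[OF has_deriv_k[OF assms]] by force
  then have "k (c + d/2) < k c"
    by simp
  moreover have "k c < k (c + d/2)"
    using k_less assms \<open>d > 0\<close> by simp
  ultimately show False
    by linarith
qed

lemma k_le_kmax: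
  assumes "c \<ge> 0"
  shows "k c \<le> kmax"
proof (rule tendsto_lowerbound[OF k_tendsto_kmax])
  show "\<forall>\<^sub>F x in at_top. k c \<le> k x"
    using eventually_ge_at_top[of c] by eventually_elim (use assms k_le in auto)
qed simp

lemma k_less_r_near_0:
  obtains \<delta> where "\<delta> > 0" "\<And>c. 0 \<le> c \<Longrightarrow> c < \<delta> \<Longrightarrow> k c < r"
proof -
  obtain \<delta> where "\<delta> > 0" "\<forall>c\<in>{0..}. dist c 0 < \<delta> \<longrightarrow> dist (k c) (k 0) < r"
    using continuous_k r_pos unfolding continuous_on_iff by (metis atLeast_iff order_refl)
  then show ?thesis
    using that[of \<delta>] by (force simp: dist_real_def k_0 abs_less_iff)
qed

lemma k_greater_r:
  obtains c where "c > 0" "k c > r"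
proof -
  obtain X where "\<And>x. x \<ge> X \<Longrightarrow> r < k x"
    using order_tendstoD(1)[OF k_tendsto_kmax kmax_gt_r] by (auto simp: eventually_at_top_linorder)
  then show ?thesis
    using that[of "max X 1"] by auto
qed

text \<open>The numerator is positive near 0, where k < r, and nondecreasing where k is convex.\<close>
lemma efficiency_deriv_numer_pos_if_convex:
  assumes c: "c > 0" and convex: "\<And>z. 0 < z \<Longrightarrow> z < c \<Longrightarrow> deriv (deriv k) z \<ge> 0"
  shows "efficiency_deriv_numer c > 0"
proof -
  obtain \<delta> where \<delta>: "\<delta> > 0" "\<And>c. 0 \<le> c \<Longrightarrow> c < \<delta> \<Longrightarrow> k c < r"
    using k_less_r_near_0 by blast
  define c' where "c' = min c \<delta> / 2"
  have c': "0 < c'" "c' < c" "c' < \<delta>"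
    using c \<delta> by (auto simp: c'_def)
  have cont: "continuous_on {c'..c} efficiency_deriv_numer"
    using c' by (intro continuous_at_imp_continuous_on ballI
                   DERIV_isCont[OF efficiency_deriv_numer_has_deriv]) auto
  have "efficiency_deriv_numer c' \<le> efficiency_deriv_numer c"
  proof (rule DERIV_nonneg_imp_increasing_open[where f = efficiency_deriv_numer])
    fix z assume "c' < z" "z < c"
    then have "z > 0" "deriv (deriv k) z \<ge> 0"
      using c' convex by auto
    then show "\<exists>d. (efficiency_deriv_numer has_real_derivative d) (at z) \<and> d \<ge> 0"
      using efficiency_deriv_numer_has_deriv by (blast intro: mult_nonneg_nonneg less_imp_le)
  qed (use c' cont in auto)
  moreover have "c' * deriv k c' \<ge> 0"
    using c' deriv_k_nonneg by simp
  then have "efficiency_deriv_numer c' > 0"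
    using \<delta>(2)[of c'] c' by (simp add: efficiency_deriv_numer_def)
  ultimately show ?thesis
    by linarith
qed

lemma efficiency_deriv_numer_strict_antimono_if_concave:
  assumes "0 < x" "x < y" and concave: "\<And>z. x \<le> z \<Longrightarrow> z \<le> y \<Longrightarrow> deriv (deriv k) z < 0"
  shows "efficiency_deriv_numer y < efficiency_deriv_numer x"
proof (rule DERIV_neg_imp_decreasing[OF \<open>x < y\<close>])
  fix z assume "x \<le> z" "z \<le> y"
  then have "z > 0" "deriv (deriv k) z < 0"
    using assms by auto
  then show "\<exists>d. (efficiency_deriv_numer has_real_derivative d) (at z) \<and> d < 0"
    using efficiency_deriv_numer_has_deriv mult_pos_neg by blast
qed

lemma efficiency_deriv_numer_zero_unique:
  assumes "a > 0" "b > 0" "efficiency_deriv_numer a = 0" "efficiency_deriv_numer b = 0"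
  shows "a = b"
proof -
  obtain c_infl where c_infl: "c_infl \<ge> 0"
    "\<And>c. 0 < c \<Longrightarrow> c < c_infl \<Longrightarrow> deriv (deriv k) c \<ge> 0"
    "\<And>c. c > c_infl \<Longrightarrow> deriv (deriv k) c < 0"
    using sigmoidal by blast
  have "c_infl < a" "c_infl < b"
    using efficiency_deriv_numer_pos_if_convex[of a] efficiency_deriv_numer_pos_if_convex[of b]
      c_infl(2) assms by (fastforce simp: not_less[symmetric])+
  moreover have "efficiency_deriv_numer y < efficiency_deriv_numer x"
    if "c_infl < x" "x < y" for x y
    using that c_infl(1,3) by (intro efficiency_deriv_numer_strict_antimono_if_concave) auto
  ultimately show ?thesis
    using assms by (cases a b rule: linorder_cases) fastforce+
qed

lemma efficiency_deriv_numer_zero_if_max: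
  assumes "c > 0" "\<And>x. x > 0 \<Longrightarrow> efficiency x \<le> efficiency c"
  shows "efficiency_deriv_numer c = 0"
proof -
  have "efficiency_deriv_numer c / c\<^sup>2 = 0"
    by (rule DERIV_local_max[OF efficiency_has_deriv[OF assms(1)] assms(1)]) (use assms in auto)
  then show ?thesis
    using assms by simp
qed

text \<open>Maximise the efficiency on a compact interval [a, M]: left of a it is negative, and
  right of M it is below efficiency c1 > 0 because k is bounded by kmax.\<close>
lemma efficiency_max_exists:
  obtains c where "c > 0" "\<And>x. x > 0 \<Longrightarrow> efficiency x \<le> efficiency c" "efficiency c > 0"
proof -
  obtain c1 where c1: "c1 > 0" "k c1 > r"
    using k_greater_r by blast
  define e1 where "e1 = efficiency c1"
  have e1: "e1 > 0"
    using c1 by (simp add: e1_def efficiency_def)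
  obtain \<delta> where \<delta>: "\<delta> > 0" "\<And>c. 0 \<le> c \<Longrightarrow> c < \<delta> \<Longrightarrow> k c < r"
    using k_less_r_near_0 by blast
  define a where "a = min (\<delta>/2) c1"
  define M where "M = max c1 ((kmax - r) / e1 + 1)"
  have a: "0 < a" "a \<le> c1" "a < \<delta>" and M: "c1 \<le> M" "(kmax - r) / e1 < M"
    using \<delta> c1 by (auto simp: a_def M_def)
  have "continuous_on {a..M} k"
    by (rule continuous_on_subset[OF continuous_k]) (use a in auto)
  then have "continuous_on {a..M} efficiency"
    unfolding efficiency_def[abs_def] using a by (intro continuous_intros) auto
  then obtain c where c: "c \<in> {a..M}" "\<And>y. y \<in> {a..M} \<Longrightarrow> efficiency y \<le> efficiency c"
    using continuous_attains_sup[OF compact_Icc, of a M efficiency] a M by fastforce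
  have "c1 \<in> {a..M}"
    using a M by auto
  then have e1_le: "e1 \<le> efficiency c"
    using c(2) unfolding e1_def by blast
  have c_max: "efficiency x \<le> efficiency c" if x: "x > 0" for x
  proof (cases "x < a")
    case True
    then have "k x < r"
      using a x \<delta>(2) by auto
    then have "efficiency x < 0"
      using x by (simp add: efficiency_def divide_neg_pos)
    then show ?thesis
      using e1 e1_le by linarith
  next
    case False
    show ?thesis
    proof (cases "x \<le> M")
      case True
      then show ?thesis using False c by auto
    next
      case False
      have "k x - r \<le> kmax - r"
        using k_le_kmax x by auto
      also have "\<dots> < e1 * M"
        using M(2) e1 by (simp add: pos_divide_less_eq mult.commute)
      also have "\<dots> < e1 * x"
        using False e1 by simp
      finally have "efficiency x < e1"
        using x by (simp add: efficiency_def pos_divide_less_eq mult.commute)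
      then show ?thesis
        using e1_le by linarith
    qed
  qed
  show ?thesis
  proof (rule that)
    show "c > 0"
      using c(1) a(1) by simp
    show "efficiency c > 0"
      using e1 e1_le by linarith
  qed (fact c_max)
qed

lemma efficiency_max_unique:
  assumes "a > 0" "\<And>x. x > 0 \<Longrightarrow> efficiency x \<le> efficiency a"
    and "b > 0" "\<And>x. x > 0 \<Longrightarrow> efficiency x \<le> efficiency b"
  shows "a = b"
  using efficiency_deriv_numer_zero_unique efficiency_deriv_numer_zero_if_max assms by metis

definition c_opt :: real where
  "c_opt = (THE c. c > 0 \<and> (\<forall>x>0. efficiency x \<le> efficiency c))"

abbreviation max_efficiency :: real where
  "max_efficiency \<equiv> efficiency c_opt"

lemma c_opt_eqI:
  assumes "c > 0" "\<And>x. x > 0 \<Longrightarrow> efficiency x \<le> efficiency c"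
  shows "c_opt = c"
  unfolding c_opt_def by (rule the_equality) (use assms efficiency_max_unique in blast)+

lemma c_opt_pos: "c_opt > 0"
  and efficiency_le_max: "x > 0 \<Longrightarrow> efficiency x \<le> max_efficiency"
  and max_efficiency_pos: "max_efficiency > 0"
  using c_opt_eqI efficiency_max_exists by metis+

lemma is_max_efficiency_iff:
  "c > 0 \<Longrightarrow> (\<forall>x>0. efficiency x \<le> efficiency c) \<longleftrightarrow> c = c_opt"
  using c_opt_eqI efficiency_le_max by auto

lemma deriv_k_eq_efficiency_iff:
  assumes "c > 0"
  shows "deriv k c = efficiency c \<longleftrightarrow> c = c_opt"
proof -
  have "deriv k c = efficiency c \<longleftrightarrow> efficiency_deriv_numer c = 0"
    using assms by (simp add: efficiency_def efficiency_deriv_numer_def field_simps)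
  moreover have "efficiency_deriv_numer c_opt = 0"
    using efficiency_deriv_numer_zero_if_max c_opt_pos efficiency_le_max by blast
  ultimately show ?thesis
    using efficiency_deriv_numer_zero_unique[OF assms c_opt_pos] by auto
qed

lemma k_c_opt_gt_r: "k c_opt > r"
  using max_efficiency_pos c_opt_pos by (simp add: efficiency_def zero_less_divide_iff)

section \<open>The AUC bound and its equality case\<close>

text \<open>The tangent of slope max_efficiency through (0, -r) supports the net kill rate
  k c - r and touches it exactly at c_opt.\<close>
definition kill_gap :: "real \<Rightarrow> real" where
  "kill_gap c = max_efficiency * c - (k c - r)"

lemma kill_gap_eq: "c > 0 \<Longrightarrow> kill_gap c = c * (max_efficiency - efficiency c)"
  by (simp add: kill_gap_def efficiency_def[of c] field_simps)

lemma kill_gap_nonneg: "c \<ge> 0 \<Longrightarrow> kill_gap c \<ge> 0"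
  using kill_gap_eq[of c] efficiency_le_max[of c] r_pos k_0
  by (cases "c = 0") (auto simp: kill_gap_def)

lemma kill_gap_eq_0_iff: "c \<ge> 0 \<Longrightarrow> kill_gap c = 0 \<longleftrightarrow> c = c_opt"
  using kill_gap_eq[of c] kill_gap_eq[of c_opt] r_pos k_0 c_opt_pos efficiency_le_max
    is_max_efficiency_iff[of c]
  by (cases "c = 0") (auto simp: kill_gap_def)

lemma integrable_kill_rate_comp:
  assumes C: "conc_profile C"
  shows "(\<lambda>t. k (C t) - r) integrable_on {0..U}"
proof -
  \<comment> \<open>k is only continuous on [0, \<infinity>); a Borel extension to all of \<real> is needed\<close>
  define k' where "k' = (\<lambda>c. k (max 0 c))"
  have "continuous_on UNIV k'"
    unfolding k'_def by (rule continuous_on_compose2[OF continuous_k]) (auto intro: continuous_intros)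
  then have "k' \<in> borel_measurable borel"
    by (rule borel_measurable_continuous_onI)
  then have "(\<lambda>t. k' (C t)) \<in> borel_measurable (lebesgue_on {0..U})"
    by (rule measurable_compose[OF integrable_imp_measurable[OF conc_profile_integrable_on_Icc[OF C]]])
  then have "(\<lambda>t. k' (C t) - r) \<in> borel_measurable (lebesgue_on {0..U})"
    by simp
  then have "(\<lambda>t. k' (C t) - r) integrable_on {0..U}"
  proof (rule measurable_bounded_by_integrable_imp_integrable_real)
    show "(\<lambda>_. kmax + r) integrable_on {0..U}"
      by (rule integrable_on_const) simp
    show "\<bar>k' (C t) - r\<bar> \<le> kmax + r" for t
      using k_nonneg[of "max 0 (C t)"] k_le_kmax[of "max 0 (C t)"] r_pos by (simp add: k'_def)
  qed simp
  then show ?thesis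
    by (rule integrable_eq) (use C in \<open>auto simp: k'_def conc_profile_def max_def\<close>)
qed

lemma integrable_kill_gap_comp:
  assumes "conc_profile C"
  shows "(\<lambda>t. kill_gap (C t)) integrable_on {0..U}"
proof -
  have "(\<lambda>t. max_efficiency * C t) integrable_on {0..U}"
    using integrable_on_cmult_left[OF conc_profile_integrable_on_Icc[OF assms], of max_efficiency]
    by simp
  then show ?thesis
    unfolding kill_gap_def by (rule integrable_diff[OF _ integrable_kill_rate_comp[OF assms]])
qed

text \<open>How far the net kill up to time U falls short of the bound max_efficiency * AUC C:
  the kill lost to concentrations other than c_opt before U, plus the AUC spent after U.\<close>
definition defect :: "(real \<Rightarrow> real) \<Rightarrow> real \<Rightarrow> real" where
  "defect C U = integral {0..U} (\<lambda>t. kill_gap (C t)) + max_efficiency * (AUC C - integral {0..U} C)"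

lemma LR_eq_defect:
  assumes "conc_profile C"
  shows "ln 10 * LR k r C U = max_efficiency * AUC C - defect C U"
proof -
  have "integral {0..U} (\<lambda>t. k (C t) - r) = integral {0..U} (\<lambda>t. max_efficiency * C t - kill_gap (C t))"
    by (simp add: kill_gap_def)
  also have "\<dots> = max_efficiency * integral {0..U} C - integral {0..U} (\<lambda>t. kill_gap (C t))"
    using integral_diff[OF integrable_on_cmult_left[OF conc_profile_integrable_on_Icc[OF assms]]
        integrable_kill_gap_comp[OF assms], of U max_efficiency]
    by simp
  finally show ?thesis
    by (simp add: LR_def defect_def algebra_simps)
qed

lemma defect_nonneg:
  assumes C: "conc_profile C"
  shows "defect C U \<ge> 0"
proof -
  have "integral {0..U} (\<lambda>t. kill_gap (C t)) \<ge> 0"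
    using C by (intro integral_nonneg integrable_kill_gap_comp kill_gap_nonneg) (auto simp: conc_profile_def)
  then show ?thesis
    using integral_Icc_le_AUC[OF C, of U] max_efficiency_pos by (simp add: defect_def)
qed

lemma LR_le: "conc_profile C \<Longrightarrow> LR k r C U \<le> max_efficiency * AUC C / ln 10"
  using LR_eq_defect[of C U] defect_nonneg[of C U] by (simp add: field_simps)

lemma LR_max_le: "conc_profile C \<Longrightarrow> LR_max k r C \<le> max_efficiency * AUC C / ln 10"
  unfolding LR_max_def by (rule cSUP_least) (auto intro: LR_le)

lemma continuous_on_defect: "conc_profile C \<Longrightarrow> continuous_on {0..T} (defect C)"
  unfolding defect_def[abs_def]
  by (intro continuous_intros indefinite_integral_continuous_1 integrable_kill_gap_comp
      conc_profile_integrable_on_Icc)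

lemma defect_arbitrarily_small:
  assumes C: "conc_profile C" and LR_max: "LR_max k r C = max_efficiency * AUC C / ln 10"
    and "e > 0"
  shows "\<exists>U\<ge>0. defect C U < e"
proof (rule ccontr)
  assume "\<not> (\<exists>U\<ge>0. defect C U < e)"
  then have "LR k r C U \<le> max_efficiency * AUC C / ln 10 - e / ln 10" if "U \<ge> 0" for U
    using that LR_eq_defect[OF C, of U] by (force simp: field_simps)
  then have "LR_max k r C \<le> max_efficiency * AUC C / ln 10 - e / ln 10"
    unfolding LR_max_def by (intro cSUP_least) auto
  then show False
    using LR_max \<open>e > 0\<close> by (simp add: field_simps)
qed

text \<open>If the gap integral up to T vanished, C would equal c_opt almost everywhere on [0, T],
  and then its integral there would be T * c_opt > AUC C.\<close>
lemma defect_bounded_below_eventually: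
  assumes C: "conc_profile C" and T: "T > AUC C / c_opt"
  shows "\<exists>\<delta>>0. \<forall>U\<ge>T. \<delta> \<le> defect C U"
proof -
  have "AUC C / c_opt \<ge> 0"
    using AUC_nonneg[OF C] c_opt_pos by simp
  then have T_pos: "T > 0"
    using T by linarith
  have C_nonneg: "\<And>t. t \<ge> 0 \<Longrightarrow> C t \<ge> 0"
    using C by (simp add: conc_profile_def)
  define \<delta> where "\<delta> = integral {0..T} (\<lambda>t. kill_gap (C t))"
  have "\<delta> \<noteq> 0"
  proof
    assume "\<delta> = 0"
    then have "negligible {t\<in>{0..T}. kill_gap (C t) \<noteq> 0}"
      unfolding \<delta>_def using C_nonneg
      by (intro negligible_nonzero_if_integral_eq_0 integrable_kill_gap_comp[OF C] kill_gap_nonneg) auto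
    then have "integral {0..T} C = integral {0..T} (\<lambda>_. c_opt)"
      by (rule integral_spike) (use C_nonneg kill_gap_eq_0_iff in auto)
    then show False
      using integral_Icc_le_AUC[OF C, of T] T T_pos c_opt_pos by (simp add: field_simps)
  qed
  moreover have "\<delta> \<ge> 0"
    unfolding \<delta>_def
    by (rule integral_nonneg[OF integrable_kill_gap_comp[OF C]]) (use C_nonneg kill_gap_nonneg in auto)
  moreover have "\<delta> \<le> defect C U" if "U \<ge> T" for U
  proof -
    have "\<delta> \<le> integral {0..U} (\<lambda>t. kill_gap (C t))"
      unfolding \<delta>_def using that
      by (intro integral_subset_le integrable_kill_gap_comp[OF C]) (use C_nonneg kill_gap_nonneg in auto)
    moreover have "max_efficiency * (AUC C - integral {0..U} C) \<ge> 0"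
      using integral_Icc_le_AUC[OF C, of U] max_efficiency_pos by simp
    ultimately show ?thesis
      unfolding defect_def by linarith
  qed
  ultimately show ?thesis
    by (metis less_eq_real_def)
qed

lemma defect_eq_0_imp_profile:
  assumes C: "conc_profile C" and U: "U \<ge> 0" and defect: "defect C U = 0"
  shows "U = AUC C / c_opt" "AE t in lborel. t \<ge> 0 \<longrightarrow> C t = (if t \<le> U then c_opt else 0)"
proof -
  have C_nonneg: "\<And>t. t \<ge> 0 \<Longrightarrow> C t \<ge> 0"
    using C by (simp add: conc_profile_def)
  have "integral {0..U} (\<lambda>t. kill_gap (C t)) \<ge> 0"
    by (rule integral_nonneg[OF integrable_kill_gap_comp[OF C]]) (use C_nonneg kill_gap_nonneg in auto)
  moreover have "max_efficiency * (AUC C - integral {0..U} C) \<ge> 0"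
    using integral_Icc_le_AUC[OF C, of U] max_efficiency_pos by simp
  ultimately have gap_0: "integral {0..U} (\<lambda>t. kill_gap (C t)) = 0"
    and "max_efficiency * (AUC C - integral {0..U} C) = 0"
    using defect unfolding defect_def by linarith+
  then have head: "integral {0..U} C = AUC C"
    using max_efficiency_pos by simp
  have "negligible {t\<in>{0..U}. kill_gap (C t) \<noteq> 0}"
    using gap_0 C_nonneg
    by (intro negligible_nonzero_if_integral_eq_0 integrable_kill_gap_comp[OF C] kill_gap_nonneg) auto
  then have N1: "negligible {t\<in>{0..U}. C t \<noteq> c_opt}"
    by (rule negligible_subset) (use C_nonneg kill_gap_eq_0_iff in auto)
  have "integral {0..U} C = integral {0..U} (\<lambda>_. c_opt)"
    by (rule integral_spike[OF N1]) auto
  then show "U = AUC C / c_opt"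
    using head U c_opt_pos by (simp add: field_simps)
  have "negligible {t\<in>{U..}. C t \<noteq> 0}"
    using integral_Ici_eq_AUC_diff[OF C U] head C_nonneg U
    by (intro negligible_nonzero_if_integral_eq_0) auto
  with N1 have "negligible ({t\<in>{0..U}. C t \<noteq> c_opt} \<union> {t\<in>{U..}. C t \<noteq> 0})"
    by (rule negligible_Un)
  moreover have "{t. \<not> (t \<ge> 0 \<longrightarrow> C t = (if t \<le> U then c_opt else 0))}
      \<subseteq> {t\<in>{0..U}. C t \<noteq> c_opt} \<union> {t\<in>{U..}. C t \<noteq> 0}"
    by auto
  ultimately show "AE t in lborel. t \<ge> 0 \<longrightarrow> C t = (if t \<le> U then c_opt else 0)"
    unfolding AE_lborel_iff_negligible by blast
qed

lemma profile_AE_if_LR_max_eq_bound: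
  assumes C: "conc_profile C" and LR_max: "LR_max k r C = max_efficiency * AUC C / ln 10"
  shows "AE t in lborel. t \<ge> 0 \<longrightarrow> C t = (if t \<le> AUC C / c_opt then c_opt else 0)"
proof -
  define T where "T = AUC C / c_opt + 1"
  have "AUC C / c_opt \<ge> 0"
    using AUC_nonneg[OF C] c_opt_pos by simp
  then have "T \<ge> 0" "T > AUC C / c_opt"
    by (simp_all add: T_def)
  obtain \<delta> where "\<delta> > 0" "\<And>U. U \<ge> T \<Longrightarrow> \<delta> \<le> defect C U"
    using defect_bounded_below_eventually[OF C \<open>T > AUC C / c_opt\<close>] by blast
  then obtain U where U: "U \<in> {0..T}" "defect C U \<le> 0"
    using continuous_on_Icc_attains_nonpos[OF \<open>T \<ge> 0\<close> continuous_on_defect[OF C]]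
      defect_arbitrarily_small[OF C LR_max] by blast
  then have "defect C U = 0"
    using defect_nonneg[OF C, of U] by linarith
  then show ?thesis
    using defect_eq_0_imp_profile[OF C _ \<open>defect C U = 0\<close>] U(1) by auto
qed

definition T_opt :: "real \<Rightarrow> real" where
  "T_opt L = ln 10 * L / (k c_opt - r)"

definition C_opt :: "real \<Rightarrow> real \<Rightarrow> real" where
  "C_opt L = (\<lambda>t. if 0 \<le> t \<and> t \<le> T_opt L then c_opt else 0)"

lemma T_opt_nonneg: "L \<ge> 0 \<Longrightarrow> T_opt L \<ge> 0"
  using k_c_opt_gt_r by (simp add: T_opt_def)

lemma T_opt_mult_c_opt: "T_opt L * c_opt = ln 10 * L / max_efficiency"
  using c_opt_pos k_c_opt_gt_r by (simp add: T_opt_def efficiency_def)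

lemma has_integral_C_opt:
  assumes "L \<ge> 0"
  shows "(C_opt L has_integral T_opt L * c_opt) {0..}"
proof -
  have "((\<lambda>_. c_opt) has_integral T_opt L * c_opt) {0..T_opt L}"
    using has_integral_const_real[of c_opt 0 "T_opt L"] T_opt_nonneg[OF assms] by simp
  then have "((\<lambda>t. if t \<in> {0..T_opt L} then c_opt else 0) has_integral T_opt L * c_opt) UNIV"
    by (rule has_integral_restrict_UNIV[THEN iffD2])
  moreover have "(\<lambda>t. if t \<in> {0..T_opt L} then c_opt else 0) = (\<lambda>t. if t \<in> {0..} then C_opt L t else 0)"
    by (auto simp: C_opt_def)
  ultimately have "((\<lambda>t. if t \<in> {0..} then C_opt L t else 0) has_integral T_opt L * c_opt) UNIV"
    by simp
  then show ?thesis
    by (rule has_integral_restrict_UNIV[THEN iffD1])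
qed

lemma conc_profile_C_opt: "L \<ge> 0 \<Longrightarrow> conc_profile (C_opt L)"
  using has_integral_C_opt c_opt_pos by (auto simp: conc_profile_def C_opt_def)

lemma AUC_C_opt: "L \<ge> 0 \<Longrightarrow> AUC (C_opt L) = T_opt L * c_opt"
  unfolding AUC_def using has_integral_C_opt by (rule integral_unique)

lemma LR_C_opt:
  assumes "L \<ge> 0"
  shows "LR k r (C_opt L) (T_opt L) = L"
proof -
  have "integral {0..T_opt L} (\<lambda>t. k (C_opt L t) - r) = integral {0..T_opt L} (\<lambda>t. k c_opt - r)"
    by (rule integral_cong) (auto simp: C_opt_def)
  also have "\<dots> = ln 10 * L"
    using T_opt_nonneg[OF assms] k_c_opt_gt_r by (simp add: T_opt_def)
  finally show ?thesis
    by (simp add: LR_def)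
qed

lemma LR_max_C_opt:
  assumes "L \<ge> 0"
  shows "LR_max k r (C_opt L) = L"
  unfolding LR_max_def
proof (rule cSup_eq_maximum)
  show "L \<in> LR k r (C_opt L) ` {0..}"
    using LR_C_opt[OF assms] T_opt_nonneg[OF assms] by (auto intro!: image_eqI[of _ _ "T_opt L"])
  show "x \<le> L" if "x \<in> LR k r (C_opt L) ` {0..}" for x
    using that LR_le[OF conc_profile_C_opt[OF assms]] max_efficiency_pos
    by (auto simp: AUC_C_opt[OF assms] T_opt_mult_c_opt)
qed

lemma AUC_ge_if_LR_max:
  assumes "conc_profile C" "LR_max k r C = L"
  shows "T_opt L * c_opt \<le> AUC C"
proof -
  have "ln 10 * L \<le> AUC C * max_efficiency"
    using LR_max_le[OF assms(1)] assms(2) by (simp add: field_simps)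
  then show ?thesis
    unfolding T_opt_mult_c_opt using max_efficiency_pos by (simp add: pos_divide_le_eq)
qed

lemma AUC_eq_iff_AE_C_opt:
  assumes C: "conc_profile C" and LR_max: "LR_max k r C = L" and "L \<ge> 0"
  shows "AUC C = T_opt L * c_opt \<longleftrightarrow> (AE t in lborel. t \<ge> 0 \<longrightarrow> C t = C_opt L t)"
proof
  assume AUC: "AUC C = T_opt L * c_opt"
  then have "LR_max k r C = max_efficiency * AUC C / ln 10"
    using LR_max max_efficiency_pos by (simp add: T_opt_mult_c_opt)
  moreover have "AUC C / c_opt = T_opt L"
    using AUC c_opt_pos by simp
  ultimately show "AE t in lborel. t \<ge> 0 \<longrightarrow> C t = C_opt L t"
    using profile_AE_if_LR_max_eq_bound[OF C] by (simp add: C_opt_def)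
next
  assume "AE t in lborel. t \<ge> 0 \<longrightarrow> C t = C_opt L t"
  then show "AUC C = T_opt L * c_opt"
    using AUC_cong_AE AUC_C_opt[OF \<open>L \<ge> 0\<close>] by metis
qed

end

theorem theorem1:
  fixes k :: "real \<Rightarrow> real" and r kmax LR_target :: real
  assumes r_pos: "r > 0"
    and A1_zero: "k 0 = 0"
    and A1_nonneg: "\<forall>c\<ge>0. k c \<ge> 0"
    and A1_cont: "continuous_on {0..} k"
    and A1_mono: "strict_mono_on {0..} k"
    and A1_diff: "\<forall>c>0. k differentiable (at c)"
    and A1_diff2: "\<forall>c>0. (deriv k) differentiable (at c)"
    and A2: "(k \<longlongrightarrow> kmax) at_top"
    and A3: "(\<forall>c>0. deriv (deriv k) c < 0) \<or>
             (\<exists>c_infl>0. (\<forall>c. 0 < c \<and> c < c_infl \<longrightarrow> deriv (deriv k) c > 0) \<and>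
                         (\<forall>c>c_infl. deriv (deriv k) c < 0))"
    and alpha_gt: "kmax / r > 1"
    and target_pos: "LR_target > 0"
  shows "\<exists>c_opt>0.
     (\<forall>c>0. (k c - r) / c \<le> (k c_opt - r) / c_opt) \<and>
     (\<forall>c>0. (\<forall>x>0. (k x - r) / x \<le> (k c - r) / c) \<longrightarrow> c = c_opt) \<and>
     (\<forall>c>0. deriv k c = (k c - r) / c \<longleftrightarrow> c = c_opt) \<and>
     (let T_opt = ln 10 * LR_target / (k c_opt - r);
          C_opt = (\<lambda>t::real. if 0 \<le> t \<and> t \<le> T_opt then c_opt else 0)
      in k c_opt > r \<and>
         conc_profile C_opt \<and>
         LR k r C_opt T_opt = LR_target \<and>
         LR_max k r C_opt = LR_target \<and>
         AUC C_opt = T_opt * c_opt \<and>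
         T_opt * c_opt = ln 10 * LR_target * (c_opt / (k c_opt - r)) \<and>
         (\<forall>C. conc_profile C \<and> LR_max k r C = LR_target \<longrightarrow>
               AUC C \<ge> T_opt * c_opt \<and>
               (AUC C = T_opt * c_opt \<longleftrightarrow>
                  (AE t in lborel. t \<ge> 0 \<longrightarrow> C t = C_opt t))))"
proof -
  have "kmax > r"
    using alpha_gt r_pos by (simp add: less_divide_eq)
  moreover have "\<exists>c_infl\<ge>0. (\<forall>c. 0 < c \<and> c < c_infl \<longrightarrow> deriv (deriv k) c \<ge> 0) \<and>
                              (\<forall>c>c_infl. deriv (deriv k) c < 0)"
    using A3 by (auto intro: less_imp_le)
  ultimately interpret kill_rate k r kmax
    using assms by unfold_locales auto
  have L: "LR_target \<ge> 0"
    using target_pos by simp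
  show ?thesis
    unfolding Let_def
    using c_opt_pos efficiency_le_max is_max_efficiency_iff deriv_k_eq_efficiency_iff k_c_opt_gt_r
      conc_profile_C_opt[OF L] LR_C_opt[OF L] LR_max_C_opt[OF L] AUC_C_opt[OF L]
      AUC_ge_if_LR_max AUC_eq_iff_AE_C_opt[OF _ _ L]
    by (intro exI[of _ c_opt]) (simp add: T_opt_def C_opt_def[abs_def] efficiency_def)
qed

end
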